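(* Let $g\colon\mathbb{S}^1\to\mathbb{S}^1$ be an orientation-preserving homeomorphism. If $x,y\in Z_1$, then either $d_Z(\iota_1(x),\iota_1(y))=\sigma(x,y)$, or there exist $w,w'\in\mathbb{S}^1$ with $$d_Z(\iota_1(x),\iota_1(y))=\sigma(x,w)+d_Z(\iota_1(w),\iota_1(w'))+\sigma(w',y)\le\sigma(x,y).$$ The corresponding statement holds for $x,y\in Z_2$ (with $\iota_2$). Moreover, if $x\in Z_1$ and $y\in Z_2$, there exist $w,w'\in\mathbb{S}^1$ with $$d_Z(\iota_1(x),\iota_2(y))=\sigma(x,w)+d_Z(\iota_1(w),\iota_1(w'))+\sigma(g(w'),y).$$
   Context: Let $\mathbb{S}^2\subset\mathbb{R}^3$ be the unit sphere with great-circle distance $\sigma$, $\mathbb{S}^1$ the equator, $Z_1,Z_2$ the open southern and northern hemispheres. For an orientation-preserving homeomorphism $g\colon\mathbb{S}^1\to\mathbb{S}^1$, $Z$ is obtained from $\overline Z_1\sqcup\overline Z_2$ by identifying $z\in\mathbb{S}^1\subset\overline Z_1$ with $g(z)\in\mathbb{S}^1\subset\overline Z_2$, with maps $\iota_i\colon\overline Z_i\to Z$. Define $D(x,y)=\infty$ if one point is in $\iota_1(Z_1)$ and the other in $\iota_2(Z_2)$; $D(\iota_1(a),\iota_1(b))=\min\{\sigma(a,b),\sigma(g(a),g(b))\}$ for $a,b\in\mathbb{S}^1$; otherwise $D(x,y)=\sigma(\iota_i^{-1}(x),\iota_i^{-1}(y))$ for the common $i$. $d_Z(x,y)=\inf\sum_{k=1}^nD(x_k,x_{k+1})$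 over finite chains $x=x_1,\dots,x_{n+1}=y$. *)

theory Defs
  imports "HOL-Analysis.Analysis" "HOL-Library.Extended_Real"
begin

type_synonym pt = "real^3"

definition S2 :: "pt set" where "S2 = {x. norm x = 1}"
definition S1 :: "pt set" where "S1 = {x \<in> S2. x$3 = 0}"
definition Z1 :: "pt set" where "Z1 = {x \<in> S2. x$3 < 0}"
definition Z2 :: "pt set" where "Z2 = {x \<in> S2. x$3 > 0}"
definition cZ1 :: "pt set" where "cZ1 = {x \<in> S2. x$3 \<le> 0}"
definition cZ2 :: "pt set" where "cZ2 = {x \<in> S2. x$3 \<ge> 0}"

definition sigma :: "pt \<Rightarrow> pt \<Rightarrow> real" where "sigma a b = arccos (a \<bullet> b)"

definition eq_param :: "real \<Rightarrow> pt" where "eq_param t = vector [cos t, sin t, 0]"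

definition orientation_preserving :: "(pt \<Rightarrow> pt) \<Rightarrow> bool" where
  "orientation_preserving g \<longleftrightarrow>
     (\<exists>F::real \<Rightarrow> real. continuous_on UNIV F \<and> strict_mono F \<and>
        (\<forall>t. F (t + 2*pi) = F t + 2*pi) \<and> (\<forall>t. g (eq_param t) = eq_param (F t)))"

definition carrier_Z :: "(pt + pt) set" where "carrier_Z = Inl ` cZ1 \<union> Inr ` cZ2"

definition glue_rel :: "(pt \<Rightarrow> pt) \<Rightarrow> ((pt + pt) \<times> (pt + pt)) set" where
  "glue_rel g = {(u, v). u \<in> carrier_Z \<and> v \<in> carrier_Z \<and>
      (u = v \<or> (\<exists>z\<in>S1. (u = Inl z \<and> v = Inr (g z)) \<or> (u = Inr (g z) \<and> v = Inl z)))}"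

definition Zspace :: "(pt \<Rightarrow> pt) \<Rightarrow> (pt + pt) set set" where
  "Zspace g = carrier_Z // glue_rel g"

definition iota1 :: "(pt \<Rightarrow> pt) \<Rightarrow> pt \<Rightarrow> (pt + pt) set" where
  "iota1 g a = glue_rel g `` {Inl a}"
definition iota2 :: "(pt \<Rightarrow> pt) \<Rightarrow> pt \<Rightarrow> (pt + pt) set" where
  "iota2 g b = glue_rel g `` {Inr b}"

definition iota1_inv :: "(pt \<Rightarrow> pt) \<Rightarrow> (pt + pt) set \<Rightarrow> pt" where
  "iota1_inv g x = the_inv_into cZ1 (iota1 g) x"
definition iota2_inv :: "(pt \<Rightarrow> pt) \<Rightarrow> (pt + pt) set \<Rightarrow> pt" where
  "iota2_inv g x = the_inv_into cZ2 (iota2 g) x"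

definition Dz :: "(pt \<Rightarrow> pt) \<Rightarrow> (pt + pt) set \<Rightarrow> (pt + pt) set \<Rightarrow> ereal" where
  "Dz g x y =
    (if (x \<in> iota1 g ` Z1 \<and> y \<in> iota2 g ` Z2) \<or> (x \<in> iota2 g ` Z2 \<and> y \<in> iota1 g ` Z1) then \<infinity>
     else if x \<in> iota1 g ` S1 \<and> y \<in> iota1 g ` S1 then
       ereal (min (sigma (iota1_inv g x) (iota1_inv g y))
                  (sigma (g (iota1_inv g x)) (g (iota1_inv g y))))
     else if x \<in> iota1 g ` cZ1 \<and> y \<in> iota1 g ` cZ1 then
       ereal (sigma (iota1_inv g x) (iota1_inv g y))
     else ereal (sigma (iota2_inv g x) (iota2_inv g y)))"

text \<open>The chain pseudometric: chains x = x_1, ..., x_(n+1) = y with n \<ge> 1,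
  written as x # ps @ [y] with intermediate points ps in Z.\<close>
definition dZ :: "(pt \<Rightarrow> pt) \<Rightarrow> (pt + pt) set \<Rightarrow> (pt + pt) set \<Rightarrow> ereal" where
  "dZ g x y = Inf {sum_list (map2 (Dz g) (x # ps) (ps @ [y])) | ps. set ps \<subseteq> Zspace g}"

end

theory Submission
  imports Defs
begin

(* A chain in Z from a point x of an open hemisphere either avoids the equator, and then the
   spherical triangle inequality bounds its cost below by sigma(x, y), or it has a first and a last
   equator point w and w'; the part in between is itself a chain from w to w', so the cost is at
   least sigma(x, w) + d_Z(w, w') plus the cost of leaving w' towards y. On the compact equator
   d_Z is Lipschitz with respect to sigma, so these route costs attain their minimum, which
   therefore realises the infimum defining d_Z. *)

lemma inner_S2_bounds:
  assumes "u \<in> S2" "v \<in> S2"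
  shows "-1 \<le> u \<bullet> v" "u \<bullet> v \<le> 1"
  using Cauchy_Schwarz_ineq2[of u v] assms by (auto simp: S2_def abs_le_iff)

lemma sigma_nonneg: "u \<in> S2 \<Longrightarrow> v \<in> S2 \<Longrightarrow> 0 \<le> sigma u v"
  unfolding sigma_def using inner_S2_bounds arccos_lbound by blast

lemma sigma_le_pi: "u \<in> S2 \<Longrightarrow> v \<in> S2 \<Longrightarrow> sigma u v \<le> pi"
  unfolding sigma_def using inner_S2_bounds arccos_ubound by blast

lemma sigma_self: "u \<in> S2 \<Longrightarrow> sigma u u = 0"
  unfolding sigma_def S2_def by (simp add: dot_square_norm)

lemma sigma_commute: "sigma u v = sigma v u"
  unfolding sigma_def by (simp add: inner_commute)

lemma sigma_triangle:
  assumes u: "u \<in> S2" and v: "v \<in> S2" and w: "w \<in> S2"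
  shows "sigma u w \<le> sigma u v + sigma v w"
proof (cases "sigma u v + sigma v w \<le> pi")
  case False
  then show ?thesis using sigma_le_pi[OF u w] by simp
next
  case True
  define p q where "p = u \<bullet> v" and "q = v \<bullet> w"
  have p: "-1 \<le> p" "p \<le> 1" and q: "-1 \<le> q" "q \<le> 1"
    using inner_S2_bounds u v w unfolding p_def q_def by auto
  have unit: "u \<bullet> u = 1" "v \<bullet> v = 1" "w \<bullet> w = 1"
    using u v w by (simp_all add: S2_def dot_square_norm)
  \<comment> \<open>split u and w into their components along v and orthogonal to v\<close>
  have split: "u \<bullet> w = p * q + (u - p *\<^sub>R v) \<bullet> (w - q *\<^sub>R v)"
    by (simp add: inner_diff_left inner_diff_right p_def q_def unit inner_commute algebra_simps)
  have "(norm (u - p *\<^sub>R v))\<^sup>2 = 1 - p\<^sup>2" "(norm (w - q *\<^sub>R v))\<^sup>2 = 1 - q\<^sup>2"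
    unfolding power2_norm_eq_inner
    by (simp_all add: inner_diff_left inner_diff_right p_def q_def unit inner_commute
        algebra_simps power2_eq_square)
  then have "norm (u - p *\<^sub>R v) = sqrt (1 - p\<^sup>2)" "norm (w - q *\<^sub>R v) = sqrt (1 - q\<^sup>2)"
    by (metis norm_ge_zero real_sqrt_unique)+
  then have "- (sqrt (1 - p\<^sup>2) * sqrt (1 - q\<^sup>2)) \<le> (u - p *\<^sub>R v) \<bullet> (w - q *\<^sub>R v)"
    using Cauchy_Schwarz_ineq2[of "u - p *\<^sub>R v" "w - q *\<^sub>R v"] by (simp add: abs_le_iff)
  moreover have "cos (sigma u v + sigma v w) = p * q - sqrt (1 - p\<^sup>2) * sqrt (1 - q\<^sup>2)"
    by (simp add: sigma_def cos_add cos_arccos sin_arccos p q flip: p_def q_def)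
  ultimately have "cos (sigma u v + sigma v w) \<le> u \<bullet> w"
    using split by linarith
  then have "arccos (u \<bullet> w) \<le> arccos (cos (sigma u v + sigma v w))"
    using inner_S2_bounds[OF u w] by (intro arccos_le_arccos) (auto intro: order_trans[OF _ cos_le_one])
  also have "\<dots> = sigma u v + sigma v w"
    using True sigma_nonneg u v w by (intro arccos_cos) auto
  finally show ?thesis unfolding sigma_def .
qed

lemma continuous_on_sigma:
  assumes "continuous_on S f" "continuous_on S g" "f ` S \<subseteq> S2" "g ` S \<subseteq> S2"
  shows "continuous_on S (\<lambda>p. sigma (f p) (g p))"
  unfolding sigma_def
  using assms inner_S2_bounds
  by (intro continuous_on_arccos continuous_intros) (auto simp: image_subset_iff)

lemma continuous_on_dominated:
  fixes f :: "'a::topological_space \<Rightarrow> real"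
  assumes "\<And>p. p \<in> S \<Longrightarrow> continuous_on S (H p)" "\<And>p. p \<in> S \<Longrightarrow> H p p = 0"
    and "\<And>p p'. p \<in> S \<Longrightarrow> p' \<in> S \<Longrightarrow> \<bar>f p' - f p\<bar> \<le> H p p'"
  shows "continuous_on S f"
  unfolding continuous_on_def
proof
  fix p assume p: "p \<in> S"
  have "(H p \<longlongrightarrow> H p p) (at p within S)"
    using assms(1)[OF p] p unfolding continuous_on_def by blast
  then have lim: "(H p \<longlongrightarrow> 0) (at p within S)"
    using assms(2)[OF p] by simp
  have "eventually (\<lambda>p'. norm (f p' - f p) \<le> H p p') (at p within S)"
    unfolding eventually_at_filter
    by (intro always_eventually allI impI) (simp add: assms(3) p)
  then have "((\<lambda>p'. f p' - f p) \<longlongrightarrow> 0) (at p within S)"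
    using lim by (rule Lim_null_comparison)
  then show "(f \<longlongrightarrow> f p) (at p within S)"
    by (rule LIM_zero_cancel)
qed

definition chain_cost :: "('p \<Rightarrow> 'p \<Rightarrow> ereal) \<Rightarrow> 'p \<Rightarrow> 'p list \<Rightarrow> 'p \<Rightarrow> ereal" where
  "chain_cost D x ps y = sum_list (map2 D (x # ps) (ps @ [y]))"

definition chain_dist :: "('p \<Rightarrow> 'p \<Rightarrow> ereal) \<Rightarrow> 'p set \<Rightarrow> 'p \<Rightarrow> 'p \<Rightarrow> ereal" where
  "chain_dist D Z x y = (INF ps\<in>{ps. set ps \<subseteq> Z}. chain_cost D x ps y)"

lemma dZ_eq_chain_dist: "dZ g = chain_dist (Dz g) (Zspace g)"
  unfolding dZ_def chain_dist_def chain_cost_def fun_eq_iff image_def by (auto intro: arg_cong[where f = Inf])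

lemma chain_cost_Nil [simp]: "chain_cost D x [] y = D x y"
  by (simp add: chain_cost_def)

lemma chain_cost_Cons: "chain_cost D x (p # ps) y = D x p + chain_cost D p ps y"
  by (simp add: chain_cost_def)

lemma chain_cost_snoc: "chain_cost D x (ps @ [r]) y = chain_cost D x ps r + D r y"
  by (induction ps arbitrary: x) (simp_all add: chain_cost_Cons add.assoc)

lemma chain_dist_le_chain_cost: "set ps \<subseteq> Z \<Longrightarrow> chain_dist D Z x y \<le> chain_cost D x ps y"
  unfolding chain_dist_def by (rule INF_lower) auto

lemma chain_dist_le: "chain_dist D Z x y \<le> D x y"
  using chain_dist_le_chain_cost[of "[]"] by simp

lemma chain_dist_greatest:
  "(\<And>ps. set ps \<subseteq> Z \<Longrightarrow> c \<le> chain_cost D x ps y) \<Longrightarrow> c \<le> chain_dist D Z x y"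
  unfolding chain_dist_def by (rule INF_greatest) auto

locale chain_space =
  fixes D :: "'p \<Rightarrow> 'p \<Rightarrow> ereal" and Z :: "'p set"
  assumes D_nonneg: "p \<in> Z \<Longrightarrow> q \<in> Z \<Longrightarrow> 0 \<le> D p q"
begin

abbreviation d :: "'p \<Rightarrow> 'p \<Rightarrow> ereal" where "d \<equiv> chain_dist D Z"

lemma chain_cost_nonneg:
  "x \<in> Z \<Longrightarrow> y \<in> Z \<Longrightarrow> set ps \<subseteq> Z \<Longrightarrow> 0 \<le> chain_cost D x ps y"
  by (induction ps arbitrary: x) (simp_all add: chain_cost_Cons D_nonneg)

lemma d_nonneg: "p \<in> Z \<Longrightarrow> q \<in> Z \<Longrightarrow> 0 \<le> d p q"
  by (intro chain_dist_greatest chain_cost_nonneg)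

lemma d_triangle_right:
  assumes "p \<in> Z" "q \<in> Z" "r \<in> Z"
  shows "d p q \<le> d p r + D r q"
proof -
  have "d p r + D r q = (INF ps\<in>{ps. set ps \<subseteq> Z}. chain_cost D p ps r + D r q)"
    unfolding chain_dist_def using assms D_nonneg[of r q]
    by (intro INF_ereal_add_left[symmetric]) (auto intro: chain_cost_nonneg exI[of _ "[]"])
  also have "d p q \<le> \<dots>"
    using assms by (intro INF_greatest) (auto simp flip: chain_cost_snoc intro!: chain_dist_le_chain_cost)
  finally show ?thesis .
qed

lemma d_triangle_left:
  assumes "p \<in> Z" "q \<in> Z" "r \<in> Z"
  shows "d p q \<le> D p r + d r q"
proof -
  have "D p r + d r q = (INF ps\<in>{ps. set ps \<subseteq> Z}. D p r + chain_cost D r ps q)"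
    unfolding chain_dist_def using assms D_nonneg[of p r]
    by (intro INF_ereal_add_right[symmetric]) (auto intro: chain_cost_nonneg exI[of _ "[]"])
  also have "d p q \<le> \<dots>"
    using assms by (intro INF_greatest) (auto simp flip: chain_cost_Cons intro!: chain_dist_le_chain_cost)
  finally show ?thesis .
qed

end

lemma ereal_le_add_ereal: "ereal a \<le> s \<Longrightarrow> b \<le> a + t \<Longrightarrow> ereal b \<le> s + ereal t"
  by (metis add_right_mono ereal_less_eq(3) order_trans plus_ereal.simps(1))

(* The glued sphere seen from one hemisphere: j embeds its closure A \<union> E (E the equator), j'
   embeds the opposite open hemisphere A', and the equator point w is identified with the point
   k w of the opposite side. *)
locale equator_gluing =
  fixes D :: "'p \<Rightarrow> 'p \<Rightarrow> ereal" and Zs :: "'p set"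
    and j j' :: "pt \<Rightarrow> 'p" and A A' E :: "pt set" and k :: "pt \<Rightarrow> pt"
  assumes Zs_eq: "Zs = j ` (A \<union> E) \<union> j' ` A'"
    and inj_j: "inj_on j (A \<union> E)" and inj_j': "inj_on j' A'"
    and sides_disjoint: "j ` (A \<union> E) \<inter> j' ` A' = {}"
    and D_commute: "D p q = D q p"
    and D_j: "a \<in> A \<Longrightarrow> b \<in> A \<union> E \<Longrightarrow> D (j a) (j b) = ereal (sigma a b)"
    and D_j': "a \<in> A' \<Longrightarrow> b \<in> A' \<union> E \<Longrightarrow> D (j' a) (j' b) = ereal (sigma a b)"
    and D_equator: "a \<in> E \<Longrightarrow> b \<in> E \<Longrightarrow> D (j a) (j b) = ereal (min (sigma a b) (sigma (k a) (k b)))"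
    and D_across: "a \<in> A \<Longrightarrow> b \<in> A' \<Longrightarrow> D (j a) (j' b) = \<infinity>"
    and j'_k: "w \<in> E \<Longrightarrow> j' (k w) = j w"
    and k_E: "k ` E \<subseteq> E" and continuous_k: "continuous_on E k"
    and A_S2: "A \<subseteq> S2" and A'_S2: "A' \<subseteq> S2" and E_S2: "E \<subseteq> S2"
    and E_nonempty: "E \<noteq> {}" and compact_E: "compact E"
begin

lemma in_S2 [simp]: "a \<in> A \<Longrightarrow> a \<in> S2" "a \<in> A' \<Longrightarrow> a \<in> S2" "a \<in> E \<Longrightarrow> a \<in> S2"
    "a \<in> E \<Longrightarrow> k a \<in> E" "a \<in> E \<Longrightarrow> k a \<in> S2"
  using A_S2 A'_S2 E_S2 k_E by auto

lemma j_in_Zs: "a \<in> A \<union> E \<Longrightarrow> j a \<in> Zs" and j'_in_Zs: "b \<in> A' \<Longrightarrow> j' b \<in> Zs"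
  unfolding Zs_eq by auto

lemma Zs_cases:
  assumes "q \<in> Zs"
  obtains a where "a \<in> A \<union> E" "q = j a" | b where "b \<in> A'" "q = j' b"
  using assms unfolding Zs_eq by blast

lemma D_j_nonneg: "a \<in> A \<union> E \<Longrightarrow> b \<in> A \<union> E \<Longrightarrow> 0 \<le> D (j a) (j b)"
  using D_j[of a b] D_j[of b a] D_equator[of a b] D_commute[of "j a" "j b"] sigma_nonneg
  by (cases "a \<in> A"; cases "b \<in> A") auto

lemma D_j_j'_nonneg: "a \<in> A \<union> E \<Longrightarrow> b \<in> A' \<Longrightarrow> 0 \<le> D (j a) (j' b)"
  using D_across[of a b] D_j'[of b "k a"] D_commute[of "j' b"] j'_k[of a] sigma_nonneg
  by (cases "a \<in> A") auto

lemma D_nonneg: "p \<in> Zs \<Longrightarrow> q \<in> Zs \<Longrightarrow> 0 \<le> D p q"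
  by (elim Zs_cases)
    (auto simp: D_j_nonneg D_j_j'_nonneg D_j' sigma_nonneg D_commute[of "j' _" "j _"])

sublocale chain_space D Zs
  by unfold_locales (rule D_nonneg)

definition eqdist :: "pt \<Rightarrow> pt \<Rightarrow> real" where
  "eqdist w w' = real_of_ereal (d (j w) (j w'))"

lemma D_equator_le: "a \<in> E \<Longrightarrow> b \<in> E \<Longrightarrow> D (j a) (j b) \<le> ereal (sigma a b)"
  and D_equator_le_k: "a \<in> E \<Longrightarrow> b \<in> E \<Longrightarrow> D (j a) (j b) \<le> ereal (sigma (k a) (k b))"
  by (simp_all add: D_equator)

lemma d_equator:
  assumes "w \<in> E" "w' \<in> E"
  shows "d (j w) (j w') = ereal (eqdist w w')" and "0 \<le> eqdist w w'" and "eqdist w w' \<le> sigma w w'"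
proof -
  have upper: "d (j w) (j w') \<le> ereal (sigma w w')"
    using chain_dist_le D_equator_le[OF assms] by (rule order_trans)
  have lower: "0 \<le> d (j w) (j w')"
    using d_nonneg j_in_Zs assms by blast
  show eq: "d (j w) (j w') = ereal (eqdist w w')"
    unfolding eqdist_def using upper lower by (cases "d (j w) (j w')") auto
  show "0 \<le> eqdist w w'" "eqdist w w' \<le> sigma w w'"
    using upper lower unfolding eq by auto
qed

lemma eqdist_self: "w \<in> E \<Longrightarrow> eqdist w w = 0"
  using d_equator[of w w] sigma_self[of w] by simp

lemma eqdist_triangle_D:
  assumes "w \<in> E" "w' \<in> E" "u \<in> E" "D (j w') (j u) \<le> ereal t"
  shows "eqdist w u \<le> eqdist w w' + t"
proof -
  have "d (j w) (j u) \<le> d (j w) (j w') + D (j w') (j u)"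
    using d_triangle_right j_in_Zs assms by blast
  also have "\<dots> \<le> d (j w) (j w') + ereal t"
    using assms(4) by (rule add_left_mono)
  finally show ?thesis using assms d_equator by simp
qed

lemma eqdist_triangle_right:
    "w \<in> E \<Longrightarrow> w' \<in> E \<Longrightarrow> u \<in> E \<Longrightarrow> eqdist w u \<le> eqdist w w' + sigma w' u"
  and eqdist_triangle_right_k:
    "w \<in> E \<Longrightarrow> w' \<in> E \<Longrightarrow> u \<in> E \<Longrightarrow> eqdist w u \<le> eqdist w w' + sigma (k w') (k u)"
  by (simp_all add: eqdist_triangle_D D_equator_le D_equator_le_k)

lemma eqdist_triangle_left:
  assumes "w \<in> E" "w' \<in> E" "u \<in> E"
  shows "eqdist w w' \<le> sigma w u + eqdist u w'"
proof -
  have "d (j w) (j w') \<le> D (j w) (j u) + d (j u) (j w')"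
    using d_triangle_left j_in_Zs assms by blast
  also have "\<dots> \<le> ereal (sigma w u) + d (j u) (j w')"
    using D_equator_le assms by (intro add_right_mono)
  finally show ?thesis using assms d_equator by simp
qed

lemma eqdist_lipschitz:
  assumes "w1 \<in> E" "w1' \<in> E" "w2 \<in> E" "w2' \<in> E"
  shows "\<bar>eqdist w2 w2' - eqdist w1 w1'\<bar> \<le> sigma w1 w2 + sigma w1' w2'"
  using eqdist_triangle_left[of w2 w2' w1] eqdist_triangle_right[of w1 w1' w2']
    eqdist_triangle_left[of w1 w1' w2] eqdist_triangle_right[of w2 w2' w1']
    sigma_commute[of w1 w2] sigma_commute[of w1' w2'] assms
  by (simp add: abs_le_iff)

lemma continuous_on_eqdist: "continuous_on (E \<times> E) (\<lambda>p. eqdist (fst p) (snd p))"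
proof (rule continuous_on_dominated)
  fix p assume p: "p \<in> E \<times> E"
  show "continuous_on (E \<times> E) (\<lambda>p'. sigma (fst p) (fst p') + sigma (snd p) (snd p'))"
    using p by (intro continuous_on_add continuous_on_sigma continuous_intros) auto
  show "sigma (fst p) (fst p) + sigma (snd p) (snd p) = 0"
    using p by (auto simp: sigma_self)
qed (auto intro: eqdist_lipschitz)

(* The three shapes a chain from j x of cost at most s ending at q can have: it stayed in A,
   or it entered the equator at w and last left it at w', towards the starting side or across. *)
definition chain_bound :: "pt \<Rightarrow> ereal \<Rightarrow> 'p \<Rightarrow> bool" where
  "chain_bound x s q \<longleftrightarrow>
     (\<exists>a\<in>A. q = j a \<and> ereal (sigma x a) \<le> s) \<or>
     (\<exists>a\<in>A \<union> E. \<exists>w\<in>E. \<exists>w'\<in>E. q = j a \<and> ereal (sigma x w + eqdist w w' + sigma w' a) \<le> s) \<or>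
     (\<exists>b\<in>A'. \<exists>w\<in>E. \<exists>w'\<in>E. q = j' b \<and> ereal (sigma x w + eqdist w w' + sigma (k w') b) \<le> s)"

lemma chain_bound_infinity: "q \<in> Zs \<Longrightarrow> chain_bound x \<infinity> q"
  using E_nonempty by (elim Zs_cases) (auto simp: chain_bound_def)

lemma chain_bound_step_hemisphere:
  assumes "x \<in> A" "a \<in> A" and s: "ereal (sigma x a) \<le> s"
    and "q \<in> Zs" "D (j a) q = ereal t"
  shows "chain_bound x (s + ereal t) q"
  using \<open>q \<in> Zs\<close>
proof (cases rule: Zs_cases)
  case (1 a2)
  then have tri: "sigma x a2 \<le> sigma x a + t"
    using assms D_j[of a a2] sigma_triangle[of x a a2] by auto
  show ?thesis
  proof (cases "a2 \<in> A")
    case True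
    then show ?thesis
      using ereal_le_add_ereal[OF s tri] 1 by (auto simp: chain_bound_def)
  next
    case False
    then have "a2 \<in> E" "sigma x a2 + eqdist a2 a2 + sigma a2 a2 \<le> sigma x a + t"
      using 1 tri by (auto simp: eqdist_self sigma_self)
    then show ?thesis
      using ereal_le_add_ereal[OF s] 1 unfolding chain_bound_def by blast
  qed
next
  case (2 b2)
  then show ?thesis using assms D_across by simp
qed

lemma chain_bound_step_equator:
  assumes "a \<in> A \<union> E" "w \<in> E" "w' \<in> E"
    and s: "ereal (sigma x w + eqdist w w' + sigma w' a) \<le> s"
    and "q \<in> Zs" and t: "D (j a) q = ereal t"
  shows "chain_bound x (s + ereal t) q"
  using \<open>q \<in> Zs\<close>
proof (cases rule: Zs_cases)
  case (1 a2)
  show ?thesis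
  proof (cases "a \<in> E \<and> a2 \<in> E")
    case True
    \<comment> \<open>the chain runs along the equator: move the exit point to a2\<close>
    have "eqdist w a2 \<le> eqdist w w' + sigma w' a + t"
      using eqdist_triangle_D[of w a a2 t] eqdist_triangle_right[of w w' a] True t 1 assms by simp
    then have "sigma x w + eqdist w a2 + sigma a2 a2 \<le> sigma x w + eqdist w w' + sigma w' a + t"
      using True by (simp add: sigma_self)
    then show ?thesis
      using ereal_le_add_ereal[OF s] 1 True \<open>w \<in> E\<close> unfolding chain_bound_def by blast
  next
    case False
    then have "t = sigma a a2"
      using 1 assms D_j[of a a2] D_j[of a2 a] D_commute[of "j a"] sigma_commute[of a] by auto
    then have "sigma x w + eqdist w w' + sigma w' a2 \<le> sigma x w + eqdist w w' + sigma w' a + t"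
      using sigma_triangle[of w' a a2] 1 assms by auto
    then show ?thesis
      using ereal_le_add_ereal[OF s] 1 assms unfolding chain_bound_def by blast
  qed
next
  case (2 b2)
  then have "a \<in> E"
    using assms D_across by auto
  then have "t = sigma (k a) b2"
    using 2 t D_j'[of b2 "k a"] D_commute[of "j a"] j'_k sigma_commute[of b2] by auto
  then have "sigma x w + eqdist w a + sigma (k a) b2 \<le> sigma x w + eqdist w w' + sigma w' a + t"
    using eqdist_triangle_right[of w w' a] \<open>a \<in> E\<close> assms by simp
  then show ?thesis
    using ereal_le_add_ereal[OF s] 2 \<open>a \<in> E\<close> assms unfolding chain_bound_def by blast
qed

lemma chain_bound_step_opposite:
  assumes "b \<in> A'" "w \<in> E" "w' \<in> E"
    and s: "ereal (sigma x w + eqdist w w' + sigma (k w') b) \<le> s"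
    and "q \<in> Zs" and t: "D (j' b) q = ereal t"
  shows "chain_bound x (s + ereal t) q"
  using \<open>q \<in> Zs\<close>
proof (cases rule: Zs_cases)
  case (1 a2)
  then have "a2 \<in> E"
    using assms D_across D_commute[of "j' b"] by auto
  then have "t = sigma b (k a2)"
    using 1 t D_j'[of b "k a2"] j'_k[of a2] assms by simp
  then have "eqdist w a2 \<le> eqdist w w' + sigma (k w') b + t"
    using eqdist_triangle_right_k[of w w' a2] sigma_triangle[of "k w'" b "k a2"] \<open>a2 \<in> E\<close> assms
    by simp
  then have "sigma x w + eqdist w a2 + sigma a2 a2 \<le> sigma x w + eqdist w w' + sigma (k w') b + t"
    using \<open>a2 \<in> E\<close> by (simp add: sigma_self)
  then show ?thesis
    using ereal_le_add_ereal[OF s] 1 \<open>a2 \<in> E\<close> assms unfolding chain_bound_def by blast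
next
  case (2 b2)
  then have "t = sigma b b2"
    using t assms D_j' by auto
  then have "sigma x w + eqdist w w' + sigma (k w') b2 \<le> sigma x w + eqdist w w' + sigma (k w') b + t"
    using sigma_triangle[of "k w'" b b2] 2 assms by simp
  then show ?thesis
    using ereal_le_add_ereal[OF s] 2 assms unfolding chain_bound_def by blast
qed

lemma chain_bound_step:
  assumes x: "x \<in> A" and bound: "chain_bound x s r" and "r \<in> Zs" "q \<in> Zs" "0 \<le> s"
  shows "chain_bound x (s + D r q) q"
proof (cases "D r q = \<infinity>")
  case True
  then show ?thesis using \<open>0 \<le> s\<close> \<open>q \<in> Zs\<close> chain_bound_infinity by auto
next
  case False
  then obtain t where t: "D r q = ereal t"
    using D_nonneg[of r q] assms by (cases "D r q") auto
  from bound[unfolded chain_bound_def] have "chain_bound x (s + ereal t) q"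
  proof (elim disjE bexE conjE)
    fix a assume "a \<in> A" "r = j a" "ereal (sigma x a) \<le> s"
    then show ?thesis using chain_bound_step_hemisphere x \<open>q \<in> Zs\<close> t by simp
  next
    fix a w w' assume "a \<in> A \<union> E" "w \<in> E" "w' \<in> E" "r = j a"
      "ereal (sigma x w + eqdist w w' + sigma w' a) \<le> s"
    then show ?thesis using chain_bound_step_equator \<open>q \<in> Zs\<close> t by simp
  next
    fix b w w' assume "b \<in> A'" "w \<in> E" "w' \<in> E" "r = j' b"
      "ereal (sigma x w + eqdist w w' + sigma (k w') b) \<le> s"
    then show ?thesis using chain_bound_step_opposite \<open>q \<in> Zs\<close> t by simp
  qed
  then show ?thesis using t by simp
qed

lemma chain_bound_chain_cost:
  assumes "x \<in> A" "set ps \<subseteq> Zs" "q \<in> Zs"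
  shows "chain_bound x (chain_cost D (j x) ps q) q"
  using assms(2,3)
proof (induction ps arbitrary: q rule: rev_induct)
  case Nil
  have "chain_bound x 0 (j x)"
    using assms(1) sigma_self[of x] unfolding chain_bound_def by (auto simp: zero_ereal_def)
  then show ?case
    using chain_bound_step[of x 0 "j x" q] assms(1) j_in_Zs Nil by simp
next
  case (snoc r ps)
  then have "chain_bound x (chain_cost D (j x) ps r) r" "0 \<le> chain_cost D (j x) ps r"
    using assms(1) j_in_Zs chain_cost_nonneg by auto
  then show ?case
    using chain_bound_step assms(1) snoc.prems by (simp add: chain_cost_snoc)
qed

lemma chain_cost_ge_same_side:
  assumes "x \<in> A" "y \<in> A" "set ps \<subseteq> Zs"
  shows "ereal (sigma x y) \<le> chain_cost D (j x) ps (j y) \<or>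
    (\<exists>w\<in>E. \<exists>w'\<in>E. ereal (sigma x w + eqdist w w' + sigma w' y) \<le> chain_cost D (j x) ps (j y))"
proof -
  have j_eq: "a \<in> A \<union> E \<Longrightarrow> j y = j a \<Longrightarrow> a = y" for a
    using inj_j assms(2) by (auto dest: inj_onD)
  have "j y \<notin> j' ` A'"
    using sides_disjoint assms(2) by auto
  moreover have "chain_bound x (chain_cost D (j x) ps (j y)) (j y)"
    using chain_bound_chain_cost assms j_in_Zs by blast
  ultimately show ?thesis
    unfolding chain_bound_def
  proof (elim disjE bexE conjE)
    fix a assume "a \<in> A" "j y = j a" "ereal (sigma x a) \<le> chain_cost D (j x) ps (j y)"
    then show ?thesis using j_eq[of a] by auto
  next
    fix a w w' assume "a \<in> A \<union> E" "w \<in> E" "w' \<in> E" "j y = j a"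
      "ereal (sigma x w + eqdist w w' + sigma w' a) \<le> chain_cost D (j x) ps (j y)"
    then show ?thesis using j_eq[of a] by auto
  qed auto
qed

lemma chain_cost_ge_opposite_sides:
  assumes "x \<in> A" "y \<in> A'" "set ps \<subseteq> Zs"
  shows "\<exists>w\<in>E. \<exists>w'\<in>E. ereal (sigma x w + eqdist w w' + sigma (k w') y) \<le> chain_cost D (j x) ps (j' y)"
proof -
  have j'_eq: "b \<in> A' \<Longrightarrow> j' y = j' b \<Longrightarrow> b = y" for b
    using inj_j' assms(2) by (auto dest: inj_onD)
  have "j' y \<notin> j ` (A \<union> E)"
    using sides_disjoint assms(2) by auto
  moreover have "chain_bound x (chain_cost D (j x) ps (j' y)) (j' y)"
    using chain_bound_chain_cost assms j'_in_Zs by blast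
  ultimately show ?thesis
    unfolding chain_bound_def
  proof (elim disjE bexE conjE)
    fix b w w' assume "b \<in> A'" "w \<in> E" "w' \<in> E" "j' y = j' b"
      "ereal (sigma x w + eqdist w w' + sigma (k w') b) \<le> chain_cost D (j x) ps (j' y)"
    then show ?thesis using j'_eq[of b] by auto
  qed auto
qed

lemma d_le_route:
  assumes "x \<in> A" "q \<in> Zs" "w \<in> E" "w' \<in> E"
  shows "d (j x) q \<le> ereal (sigma x w + eqdist w w') + D (j w') q"
proof -
  have "d (j x) q \<le> D (j x) (j w) + d (j w) q"
    using d_triangle_left j_in_Zs assms by blast
  also have "\<dots> \<le> D (j x) (j w) + (d (j w) (j w') + D (j w') q)"
    using d_triangle_right j_in_Zs assms by (blast intro: add_left_mono)
  also have "\<dots> = ereal (sigma x w + eqdist w w') + D (j w') q"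
    using assms D_j d_equator by (simp flip: add.assoc)
  finally show ?thesis .
qed

lemma route_attains_min:
  assumes "x \<in> A" "continuous_on E c"
  obtains w0 w0' where "w0 \<in> E" "w0' \<in> E"
    "\<And>w w'. w \<in> E \<Longrightarrow> w' \<in> E \<Longrightarrow> sigma x w0 + eqdist w0 w0' + c w0' \<le> sigma x w + eqdist w w' + c w'"
proof -
  have "continuous_on (E \<times> E) (\<lambda>p. sigma x (fst p) + eqdist (fst p) (snd p) + c (snd p))"
    using assms continuous_on_eqdist
    by (intro continuous_on_add continuous_on_sigma continuous_on_compose2[OF assms(2)] continuous_intros) auto
  then obtain p0 where "p0 \<in> E \<times> E"
    "\<And>p. p \<in> E \<times> E \<Longrightarrow> sigma x (fst p0) + eqdist (fst p0) (snd p0) + c (snd p0)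
      \<le> sigma x (fst p) + eqdist (fst p) (snd p) + c (snd p)"
    using continuous_attains_inf[OF compact_Times[OF compact_E compact_E]] E_nonempty by blast
  then show ?thesis
    using that[of "fst p0" "snd p0"] by force
qed

lemma d_same_side_eq_min:
  assumes x: "x \<in> A" and y: "y \<in> A" and w0: "w0 \<in> E" "w0' \<in> E" and min:
    "\<And>w w'. w \<in> E \<Longrightarrow> w' \<in> E \<Longrightarrow>
      sigma x w0 + eqdist w0 w0' + sigma w0' y \<le> sigma x w + eqdist w w' + sigma w' y"
  shows "d (j x) (j y) = min (ereal (sigma x y)) (ereal (sigma x w0 + eqdist w0 w0' + sigma w0' y))"
    (is "_ = min _ (ereal ?m)")
proof (rule antisym[OF min.boundedI])
  show "d (j x) (j y) \<le> ereal (sigma x y)"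
    using chain_dist_le[of D Zs "j x" "j y"] D_j x y by simp
  have "D (j w0') (j y) = ereal (sigma w0' y)"
    using D_j[of y w0'] D_commute[of "j w0'"] sigma_commute[of y] y w0 by simp
  then show "d (j x) (j y) \<le> ereal ?m"
    using d_le_route[of x "j y" w0 w0'] x y w0 j_in_Zs by simp
  show "min (ereal (sigma x y)) (ereal ?m) \<le> d (j x) (j y)"
  proof (rule chain_dist_greatest)
    fix ps assume "set ps \<subseteq> Zs"
    then consider "ereal (sigma x y) \<le> chain_cost D (j x) ps (j y)"
      | w w' where "w \<in> E" "w' \<in> E"
        "ereal (sigma x w + eqdist w w' + sigma w' y) \<le> chain_cost D (j x) ps (j y)"
      using chain_cost_ge_same_side[OF x y] by blast
    then show "min (ereal (sigma x y)) (ereal ?m) \<le> chain_cost D (j x) ps (j y)"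
    proof cases
      case 1
      then show ?thesis by (rule min.coboundedI1)
    next
      case 2
      then have "ereal ?m \<le> chain_cost D (j x) ps (j y)"
        using min[of w w'] by (meson ereal_less_eq(3) order.trans)
      then show ?thesis by (rule min.coboundedI2)
    qed
  qed
qed

theorem d_same_side:
  assumes x: "x \<in> A" and y: "y \<in> A"
  shows "d (j x) (j y) = ereal (sigma x y) \<or>
    (\<exists>w\<in>E. \<exists>w'\<in>E.
       d (j x) (j y) = ereal (sigma x w) + d (j w) (j w') + ereal (sigma w' y) \<and>
       ereal (sigma x w) + d (j w) (j w') + ereal (sigma w' y) \<le> ereal (sigma x y))"
proof -
  have "continuous_on E (\<lambda>w'. sigma w' y)"
    using y by (intro continuous_on_sigma continuous_intros) auto
  then obtain w0 w0' where w0: "w0 \<in> E" "w0' \<in> E" and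
    "\<And>w w'. w \<in> E \<Longrightarrow> w' \<in> E \<Longrightarrow>
      sigma x w0 + eqdist w0 w0' + sigma w0' y \<le> sigma x w + eqdist w w' + sigma w' y"
    using route_attains_min x by blast
  then have d_eq: "d (j x) (j y) = min (ereal (sigma x y)) (ereal (sigma x w0 + eqdist w0 w0' + sigma w0' y))"
    using d_same_side_eq_min x y by blast
  have route: "ereal (sigma x w0) + d (j w0) (j w0') + ereal (sigma w0' y)
      = ereal (sigma x w0 + eqdist w0 w0' + sigma w0' y)"
    using w0 d_equator by simp
  show ?thesis
  proof (cases "sigma x y \<le> sigma x w0 + eqdist w0 w0' + sigma w0' y")
    case True
    then show ?thesis using d_eq by simp
  next
    case False
    then show ?thesis using d_eq route w0 by (intro disjI2 bexI[of _ w0] bexI[of _ w0']) auto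
  qed
qed

theorem d_opposite_sides:
  assumes x: "x \<in> A" and y: "y \<in> A'"
  shows "\<exists>w\<in>E. \<exists>w'\<in>E. d (j x) (j' y) = ereal (sigma x w) + d (j w) (j w') + ereal (sigma (k w') y)"
proof -
  have "continuous_on E (\<lambda>w'. sigma (k w') y)"
    using y continuous_k by (intro continuous_on_sigma continuous_intros) auto
  then obtain w0 w0' where w0: "w0 \<in> E" "w0' \<in> E" and min:
    "\<And>w w'. w \<in> E \<Longrightarrow> w' \<in> E \<Longrightarrow>
      sigma x w0 + eqdist w0 w0' + sigma (k w0') y \<le> sigma x w + eqdist w w' + sigma (k w') y"
    using route_attains_min x by blast
  define m where "m = sigma x w0 + eqdist w0 w0' + sigma (k w0') y"
  have "D (j w0') (j' y) = ereal (sigma (k w0') y)"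
    using D_j'[of y "k w0'"] D_commute[of "j' y"] j'_k[of w0'] sigma_commute[of y] y w0 by simp
  then have "d (j x) (j' y) \<le> ereal m"
    using d_le_route[of x "j' y" w0 w0'] x y w0 j'_in_Zs by (simp add: m_def)
  moreover have "ereal m \<le> d (j x) (j' y)"
  proof (rule chain_dist_greatest)
    fix ps assume "set ps \<subseteq> Zs"
    then obtain w w' where "w \<in> E" "w' \<in> E"
      "ereal (sigma x w + eqdist w w' + sigma (k w') y) \<le> chain_cost D (j x) ps (j' y)"
      using chain_cost_ge_opposite_sides[OF x y] by blast
    then show "ereal m \<le> chain_cost D (j x) ps (j' y)"
      using min[of w w'] unfolding m_def by (meson ereal_less_eq(3) order.trans)
  qed
  moreover have "ereal (sigma x w0) + d (j w0) (j w0') + ereal (sigma (k w0') y) = ereal m"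
    using w0 d_equator by (simp add: m_def)
  ultimately show ?thesis
    using w0 by (intro bexI[of _ w0] bexI[of _ w0']) auto
qed

end

lemma sphere_parts:
  "S1 \<subseteq> S2" "Z1 \<subseteq> S2" "Z2 \<subseteq> S2" "Z1 \<inter> S1 = {}" "Z2 \<inter> S1 = {}"
  unfolding S1_def Z1_def Z2_def by auto

lemma cZ1_eq: "cZ1 = Z1 \<union> S1" and cZ2_eq: "cZ2 = Z2 \<union> S1"
  unfolding S1_def Z1_def Z2_def cZ1_def cZ2_def by auto

lemma S1_nonempty: "S1 \<noteq> {}"
proof -
  have "vector [1, 0, 0] \<in> S1"
    unfolding S1_def S2_def by (simp add: norm_eq_sqrt_inner inner_vec_def sum_3 vector_3)
  then show ?thesis by auto
qed

lemma compact_S1: "compact S1"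
proof -
  have "S1 = sphere 0 1 \<inter> {x::pt. x $ 3 = 0}"
    unfolding S1_def S2_def by auto
  moreover have "closed {x::pt. x $ 3 = 0}"
    by (intro closed_Collect_eq continuous_intros)
  ultimately show ?thesis
    using compact_Int_closed[OF compact_sphere] by metis
qed

lemma Dz_commute: "Dz g x y = Dz g y x"
  unfolding Dz_def by (auto simp: sigma_commute min.commute)

locale equator_homeomorphism =
  fixes g h :: "pt \<Rightarrow> pt"
  assumes homeomorphism: "homeomorphism S1 S1 g h"
begin

lemma g_S1: "w \<in> S1 \<Longrightarrow> g w \<in> S1" and h_S1: "w \<in> S1 \<Longrightarrow> h w \<in> S1"
  and h_g: "w \<in> S1 \<Longrightarrow> h (g w) = w" and g_h: "w \<in> S1 \<Longrightarrow> g (h w) = w"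
  and continuous_g: "continuous_on S1 g" and continuous_h: "continuous_on S1 h"
  using homeomorphism unfolding homeomorphism_def by auto

lemma iota1_Z1: "a \<in> Z1 \<Longrightarrow> iota1 g a = {Inl a}"
  unfolding iota1_def using sphere_parts cZ1_eq by (auto simp: glue_rel_def carrier_Z_def)

lemma iota2_Z2: "b \<in> Z2 \<Longrightarrow> iota2 g b = {Inr b}"
  unfolding iota2_def using sphere_parts cZ2_eq g_S1 by (auto simp: glue_rel_def carrier_Z_def)

lemma iota1_S1_pair: "w \<in> S1 \<Longrightarrow> iota1 g w = {Inl w, Inr (g w)}"
  unfolding iota1_def using sphere_parts cZ1_eq cZ2_eq g_S1
  by (auto simp: glue_rel_def carrier_Z_def)

lemma iota2_S1_pair: "w \<in> S1 \<Longrightarrow> iota2 g w = {Inl (h w), Inr w}"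
  unfolding iota2_def using sphere_parts cZ1_eq cZ2_eq g_S1 h_S1 g_h h_g
  by (auto simp: glue_rel_def carrier_Z_def)

lemma iota2_S1: "w \<in> S1 \<Longrightarrow> iota2 g w = iota1 g (h w)"
  using iota1_S1_pair iota2_S1_pair h_S1 g_h by auto

lemma iota2_g: "w \<in> S1 \<Longrightarrow> iota2 g (g w) = iota1 g w"
  using iota2_S1 g_S1 h_g by auto

lemma Inl_mem_iota1: "a \<in> cZ1 \<Longrightarrow> Inl c \<in> iota1 g a \<longleftrightarrow> c = a"
  by (cases "a \<in> Z1") (auto simp: iota1_Z1 iota1_S1_pair cZ1_eq)

lemma Inr_mem_iota2: "b \<in> cZ2 \<Longrightarrow> Inr c \<in> iota2 g b \<longleftrightarrow> c = b"
  by (cases "b \<in> Z2") (auto simp: iota2_Z2 iota2_S1_pair cZ2_eq)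

lemma inj_on_iota1: "inj_on (iota1 g) cZ1"
  and inj_on_iota2: "inj_on (iota2 g) cZ2"
  by (metis inj_onI Inl_mem_iota1 Inr_mem_iota2)+

lemma iota1_ne_iota2_Z2: "a \<in> cZ1 \<Longrightarrow> b \<in> Z2 \<Longrightarrow> iota1 g a \<noteq> iota2 g b"
  and iota1_Z1_ne_iota2: "a \<in> Z1 \<Longrightarrow> b \<in> cZ2 \<Longrightarrow> iota1 g a \<noteq> iota2 g b"
  using Inl_mem_iota1 iota2_Z2 Inr_mem_iota2 iota1_Z1 by blast+

lemma iota1_inv_iota1: "a \<in> cZ1 \<Longrightarrow> iota1_inv g (iota1 g a) = a"
  and iota2_inv_iota2: "b \<in> cZ2 \<Longrightarrow> iota2_inv g (iota2 g b) = b"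
  unfolding iota1_inv_def iota2_inv_def
  by (simp_all add: the_inv_into_f_f inj_on_iota1 inj_on_iota2)

lemma Zspace_eq_south: "Zspace g = iota1 g ` (Z1 \<union> S1) \<union> iota2 g ` Z2"
  and Zspace_eq_north: "Zspace g = iota2 g ` (Z2 \<union> S1) \<union> iota1 g ` Z1"
proof -
  have "Zspace g = iota1 g ` cZ1 \<union> iota2 g ` cZ2"
    unfolding Zspace_def quotient_def carrier_Z_def iota1_def iota2_def by auto
  moreover have "iota2 g ` S1 = iota1 g ` S1"
    using iota2_S1 iota2_g h_S1 g_S1 by (auto simp: image_iff) metis
  ultimately show "Zspace g = iota1 g ` (Z1 \<union> S1) \<union> iota2 g ` Z2"
    "Zspace g = iota2 g ` (Z2 \<union> S1) \<union> iota1 g ` Z1"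
    unfolding cZ1_eq cZ2_eq image_Un by auto
qed

lemma Dz_iota1:
  assumes "a \<in> Z1" "b \<in> cZ1"
  shows "Dz g (iota1 g a) (iota1 g b) = ereal (sigma a b)"
proof -
  have "a \<in> cZ1" "S1 \<subseteq> cZ1" "a \<notin> S1"
    using assms sphere_parts by (auto simp: cZ1_eq)
  then have "iota1 g a \<notin> iota1 g ` S1"
    using inj_on_image_mem_iff[OF inj_on_iota1] by blast
  moreover have "iota1 g a \<notin> iota2 g ` Z2" "iota1 g b \<notin> iota2 g ` Z2"
    using iota1_ne_iota2_Z2 \<open>a \<in> cZ1\<close> assms(2) by blast+
  ultimately show ?thesis
    unfolding Dz_def using \<open>a \<in> cZ1\<close> assms(2) by (auto simp: iota1_inv_iota1)
qed

lemma Dz_iota1_S1: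
  assumes "a \<in> S1" "b \<in> S1"
  shows "Dz g (iota1 g a) (iota1 g b) = ereal (min (sigma a b) (sigma (g a) (g b)))"
proof -
  have "a \<in> cZ1" "b \<in> cZ1"
    using assms by (auto simp: cZ1_eq)
  then have "iota1 g a \<notin> iota2 g ` Z2" "iota1 g b \<notin> iota2 g ` Z2"
    using iota1_ne_iota2_Z2 by blast+
  then show ?thesis
    unfolding Dz_def using assms \<open>a \<in> cZ1\<close> \<open>b \<in> cZ1\<close> by (auto simp: iota1_inv_iota1)
qed

lemma Dz_iota2:
  assumes "a \<in> Z2" "b \<in> cZ2"
  shows "Dz g (iota2 g a) (iota2 g b) = ereal (sigma a b)"
proof -
  have "a \<in> cZ2"
    using assms by (auto simp: cZ2_eq)
  have "iota2 g a \<notin> iota1 g ` cZ1"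
    using iota1_ne_iota2_Z2 assms(1) by blast
  then have "iota2 g a \<notin> iota1 g ` S1" "iota2 g a \<notin> iota1 g ` Z1"
    by (auto simp: cZ1_eq)
  moreover have "iota2 g b \<notin> iota1 g ` Z1"
    using iota1_Z1_ne_iota2 assms(2) by blast
  ultimately show ?thesis
    unfolding Dz_def using \<open>iota2 g a \<notin> iota1 g ` cZ1\<close> \<open>a \<in> cZ2\<close> assms(2)
    by (auto simp: iota2_inv_iota2)
qed

lemma Dz_iota2_S1:
  "a \<in> S1 \<Longrightarrow> b \<in> S1 \<Longrightarrow> Dz g (iota2 g a) (iota2 g b) = ereal (min (sigma a b) (sigma (h a) (h b)))"
  using Dz_iota1_S1[of "h a" "h b"] by (simp add: iota2_S1 h_S1 g_h min.commute)

lemma Dz_iota1_iota2: "a \<in> Z1 \<Longrightarrow> b \<in> Z2 \<Longrightarrow> Dz g (iota1 g a) (iota2 g b) = \<infinity>"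
  unfolding Dz_def by auto

lemma gluing_south: "equator_gluing (Dz g) (Zspace g) (iota1 g) (iota2 g) Z1 Z2 S1 g"
proof
  show "inj_on (iota1 g) (Z1 \<union> S1)" "inj_on (iota2 g) Z2"
    using inj_on_iota1 inj_on_iota2 by (auto simp: cZ1_eq cZ2_eq intro: inj_on_subset)
  show "iota1 g ` (Z1 \<union> S1) \<inter> iota2 g ` Z2 = {}"
    using iota1_ne_iota2_Z2 by (auto simp: cZ1_eq)
  show "Dz g p q = Dz g q p" for p q
    by (rule Dz_commute)
qed (simp_all add: Zspace_eq_south Dz_iota1 Dz_iota2 Dz_iota1_S1
    Dz_iota1_iota2 iota2_g image_subsetI g_S1 continuous_g sphere_parts S1_nonempty compact_S1
    cZ1_eq cZ2_eq)

lemma gluing_north: "equator_gluing (Dz g) (Zspace g) (iota2 g) (iota1 g) Z2 Z1 S1 h"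
proof
  show "inj_on (iota2 g) (Z2 \<union> S1)" "inj_on (iota1 g) Z1"
    using inj_on_iota1 inj_on_iota2 by (auto simp: cZ1_eq cZ2_eq intro: inj_on_subset)
  show "iota2 g ` (Z2 \<union> S1) \<inter> iota1 g ` Z1 = {}"
    using iota1_Z1_ne_iota2 by (auto simp: cZ2_eq)
  show "Dz g (iota2 g a) (iota1 g b) = \<infinity>" if "a \<in> Z2" "b \<in> Z1" for a b
    using Dz_iota1_iota2 Dz_commute that by metis
  show "Dz g p q = Dz g q p" for p q
    by (rule Dz_commute)
qed (simp_all add: Zspace_eq_north Dz_iota1 Dz_iota2 Dz_iota2_S1
    iota2_S1[symmetric] image_subsetI h_S1 continuous_h sphere_parts S1_nonempty compact_S1 cZ1_eq cZ2_eq)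

end

theorem lemma3p2:
  fixes g :: "real^3 \<Rightarrow> real^3"
  assumes homeo: "\<exists>h. homeomorphism S1 S1 g h"
    and orient: "orientation_preserving g"
  shows "(\<forall>x\<in>Z1. \<forall>y\<in>Z1.
            dZ g (iota1 g x) (iota1 g y) = ereal (sigma x y) \<or>
            (\<exists>w\<in>S1. \<exists>w'\<in>S1.
               dZ g (iota1 g x) (iota1 g y)
                 = ereal (sigma x w) + dZ g (iota1 g w) (iota1 g w') + ereal (sigma w' y) \<and>
               ereal (sigma x w) + dZ g (iota1 g w) (iota1 g w') + ereal (sigma w' y)
                 \<le> ereal (sigma x y)))
       \<and> (\<forall>x\<in>Z2. \<forall>y\<in>Z2.
            dZ g (iota2 g x) (iota2 g y) = ereal (sigma x y) \<or>
            (\<exists>w\<in>S1. \<exists>w'\<in>S1.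
               dZ g (iota2 g x) (iota2 g y)
                 = ereal (sigma x w) + dZ g (iota2 g w) (iota2 g w') + ereal (sigma w' y) \<and>
               ereal (sigma x w) + dZ g (iota2 g w) (iota2 g w') + ereal (sigma w' y)
                 \<le> ereal (sigma x y)))
       \<and> (\<forall>x\<in>Z1. \<forall>y\<in>Z2. \<exists>w\<in>S1. \<exists>w'\<in>S1.
            dZ g (iota1 g x) (iota2 g y)
              = ereal (sigma x w) + dZ g (iota1 g w) (iota1 g w') + ereal (sigma (g w') y))"
proof -
  obtain h where "homeomorphism S1 S1 g h"
    using homeo by blast
  then interpret equator_homeomorphism g h
    by (rule equator_homeomorphism.intro)
  interpret south: equator_gluing "Dz g" "Zspace g" "iota1 g" "iota2 g" Z1 Z2 S1 g
    by (rule gluing_south)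
  interpret north: equator_gluing "Dz g" "Zspace g" "iota2 g" "iota1 g" Z2 Z1 S1 h
    by (rule gluing_north)
  show ?thesis
    unfolding dZ_eq_chain_dist
    using south.d_same_side north.d_same_side south.d_opposite_sides by blast
qed

end
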